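(* Let $u$ be a recurrent aperiodic infinite word over a finite ordered alphabet, and let $w$ and $v$ be factors of $u$. Then it is impossible that simultaneously there exist $k,l\ge 0$ such that $T^k(u)$ is the lexicographically maximal element among the infinite words in the shift orbit closure of $u$ that start with $w$, and $T^l(u)$ is the lexicographically minimal element among the infinite words in the shift orbit closure of $u$ that start with $v$.
   Context: For an infinite word $u=u[0]u[1]\cdots$, $T^n u=u[n]u[n+1]\cdots$ is its $n$-th shift; the shift orbit closure of $u$ is the closure (in the product topology) of $\{T^n u: n\ge 0\}$. Words are compared lexicographically ($0<1<\dots<q-1$; $x<y$ if they agree up to some position and at the first differing position $x$ has the smaller letter). A word is recurrent if every factor occurs infinitely often; aperiodic means not ultimately periodic. *)

theory Defs
  imports Main
begin

definition shift :: "nat \<Rightarrow> (nat \<Rightarrow> 'a) \<Rightarrow> (nat \<Rightarrow> 'a)" where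
  "shift n u = (\<lambda>i. u (n + i))"

definition orbit :: "(nat \<Rightarrow> 'a) \<Rightarrow> (nat \<Rightarrow> 'a) set" where
  "orbit u = range (\<lambda>n. shift n u)"

text \<open>Closure in the product topology of the discrete alphabet: every finite prefix
  (cylinder neighbourhood) meets the set.\<close>
definition word_closure :: "(nat \<Rightarrow> 'a) set \<Rightarrow> (nat \<Rightarrow> 'a) set" where
  "word_closure S = {x. \<forall>n. \<exists>y\<in>S. \<forall>i<n. x i = y i}"

definition orbit_closure :: "(nat \<Rightarrow> 'a) \<Rightarrow> (nat \<Rightarrow> 'a) set" where
  "orbit_closure u = word_closure (orbit u)"

definition lex_less :: "(nat \<Rightarrow> 'a::linorder) \<Rightarrow> (nat \<Rightarrow> 'a) \<Rightarrow> bool" where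
  "lex_less x y \<longleftrightarrow> (\<exists>n. (\<forall>i<n. x i = y i) \<and> x n < y n)"

definition starts_with :: "(nat \<Rightarrow> 'a) \<Rightarrow> 'a list \<Rightarrow> bool" where
  "starts_with x w \<longleftrightarrow> (\<forall>i<length w. x i = w ! i)"

definition is_factor :: "'a list \<Rightarrow> (nat \<Rightarrow> 'a) \<Rightarrow> bool" where
  "is_factor w u \<longleftrightarrow> (\<exists>m. starts_with (shift m u) w)"

definition recurrent :: "(nat \<Rightarrow> 'a) \<Rightarrow> bool" where
  "recurrent u \<longleftrightarrow> (\<forall>w. is_factor w u \<longrightarrow> infinite {m. starts_with (shift m u) w})"

definition ultimately_periodic :: "(nat \<Rightarrow> 'a) \<Rightarrow> bool" where
  "ultimately_periodic u \<longleftrightarrow> (\<exists>p>0. \<exists>N. \<forall>i\<ge>N. u (i + p) = u i)"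

definition aperiodic :: "(nat \<Rightarrow> 'a) \<Rightarrow> bool" where
  "aperiodic u \<longleftrightarrow> \<not> ultimately_periodic u"

definition lex_max_in :: "(nat \<Rightarrow> 'a::linorder) \<Rightarrow> (nat \<Rightarrow> 'a) set \<Rightarrow> bool" where
  "lex_max_in x A \<longleftrightarrow> x \<in> A \<and> (\<forall>y\<in>A. \<not> lex_less x y)"

definition lex_min_in :: "(nat \<Rightarrow> 'a::linorder) \<Rightarrow> (nat \<Rightarrow> 'a) set \<Rightarrow> bool" where
  "lex_min_in x A \<longleftrightarrow> x \<in> A \<and> (\<forall>y\<in>A. \<not> lex_less y x)"

end

theory Submission
  imports Defs
begin

text \<open>Suppose \<open>T\<^sup>k u\<close> is lexicographically maximal among the words of the orbit closure
  starting with \<open>w\<close> and \<open>T\<^sup>l u\<close> minimal among those starting with \<open>v\<close>, say \<open>k \<le> l\<close>.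
  By recurrence, the prefix of length \<open>(l - k) + |v| + |w|\<close> of \<open>T\<^sup>k u\<close> reoccurs at some
  position \<open>k + m\<close> with \<open>m > 0\<close>. Then \<open>T\<^sup>k\<^sup>+\<^sup>m u\<close> starts with \<open>w\<close>, so it is not above
  \<open>T\<^sup>k u\<close>, and \<open>T\<^sup>l\<^sup>+\<^sup>m u\<close> starts with \<open>v\<close>, so it is not below \<open>T\<^sup>l u\<close>. As the two pairs
  agree on the first \<open>l - k\<close> letters, comparing them after a shift by \<open>l - k\<close> is the same
  as comparing them before, so \<open>T\<^sup>k\<^sup>+\<^sup>m u = T\<^sup>k u\<close> and \<open>u\<close> is ultimately periodic.
  The case \<open>l \<le> k\<close> is the same argument for the reversed order.\<close>

lemma shift_shift: "shift m (shift n u) = shift (n + m) u"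
  unfolding shift_def by (simp add: add.assoc)

lemma shift_in_orbit_closure: "shift n u \<in> orbit_closure u"
  unfolding orbit_closure_def word_closure_def orbit_def by blast

lemma starts_with_agree:
  assumes "\<forall>i<length w. x i = y i" and "starts_with x w"
  shows "starts_with y w"
  using assms unfolding starts_with_def by auto

lemma lex_less_total:
  fixes x y :: "nat \<Rightarrow> 'a::linorder"
  assumes "x \<noteq> y"
  shows "lex_less x y \<or> lex_less y x"
proof -
  define p where "p = (LEAST i. x i \<noteq> y i)"
  obtain i where "x i \<noteq> y i"
    using assms by blast
  then have "x p \<noteq> y p"
    unfolding p_def by (rule LeastI)
  moreover have "\<forall>i<p. x i = y i"
    unfolding p_def using not_less_Least by blast
  ultimately show ?thesis
    unfolding lex_less_def by (metis neq_iff)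
qed

lemma lex_less_shift_iff:
  fixes x y :: "nat \<Rightarrow> 'a::linorder"
  assumes agree: "\<forall>i<d. x i = y i"
  shows "lex_less (shift d x) (shift d y) \<longleftrightarrow> lex_less x y"
proof
  assume "lex_less (shift d x) (shift d y)"
  then obtain n where after_d: "\<forall>i<n. x (d + i) = y (d + i)" and "x (d + n) < y (d + n)"
    unfolding lex_less_def shift_def by blast
  moreover have "\<forall>i<d + n. x i = y i"
  proof (intro allI impI)
    fix i assume "i < d + n"
    show "x i = y i"
    proof (cases "i < d")
      case True
      then show ?thesis using agree by blast
    next
      case False
      then have "i = d + (i - d)" and "i - d < n" using \<open>i < d + n\<close> by auto
      then show ?thesis using after_d by metis
    qed
  qed
  ultimately show "lex_less x y"
    unfolding lex_less_def by blast
next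
  assume "lex_less x y"
  then obtain n where below: "\<forall>i<n. x i = y i" and at: "x n < y n"
    unfolding lex_less_def by blast
  have "d \<le> n"
  proof (rule ccontr)
    assume "\<not> d \<le> n"
    then have "x n = y n" using agree by simp
    with at show False by simp
  qed
  with below at show "lex_less (shift d x) (shift d y)"
    unfolding lex_less_def shift_def by (intro exI[of _ "n - d"]) auto
qed

lemma recurrent_return:
  assumes "recurrent u"
  shows "\<exists>m>0. \<forall>i<N. shift (a + m) u i = shift a u i"
proof -
  define z where "z = map (shift a u) [0..<N]"
  have "starts_with (shift a u) z"
    unfolding starts_with_def z_def by simp
  then have "infinite {n. starts_with (shift n u) z}"
    using assms unfolding recurrent_def is_factor_def by blast
  then obtain n where "n > a" and "starts_with (shift n u) z"
    unfolding finite_nat_set_iff_bounded not_ex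
    by (metis (no_types, lifting) mem_Collect_eq not_less_eq)
  then show ?thesis
    unfolding starts_with_def z_def shift_def by (intro exI[of _ "n - a"]) auto
qed

lemma aperiodic_shift_neq:
  assumes "aperiodic u" and "m > 0"
  shows "shift (a + m) u \<noteq> shift a u"
proof
  assume "shift (a + m) u = shift a u"
  then have "\<forall>i\<ge>a. u (i + m) = u i"
    unfolding shift_def by (metis add.assoc add.commute le_add_diff_inverse)
  with assms show False
    unfolding aperiodic_def ultimately_periodic_def by blast
qed

text \<open>Stated for any total comparison \<open>R\<close> compatible with shifting words that share a
  prefix, so that it covers both the lexicographic order and its converse.\<close>
lemma no_opposite_extremal_occurrences:
  fixes R :: "(nat \<Rightarrow> 'a) \<Rightarrow> (nat \<Rightarrow> 'a) \<Rightarrow> bool"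
  assumes "recurrent u" and "aperiodic u"
    and R_total: "\<And>x y. x \<noteq> y \<Longrightarrow> R x y \<or> R y x"
    and R_shift: "\<And>x y d. \<forall>i<d. x i = y i \<Longrightarrow> R (shift d x) (shift d y) \<longleftrightarrow> R x y"
    and "p \<le> q" and w_at_p: "starts_with (shift p u) w" and v_at_q: "starts_with (shift q u) v"
    and p_max: "\<And>j. starts_with (shift j u) w \<Longrightarrow> \<not> R (shift p u) (shift j u)"
    and q_min: "\<And>j. starts_with (shift j u) v \<Longrightarrow> \<not> R (shift j u) (shift q u)"
  shows False
proof -
  define d where "d = q - p"
  obtain m where "m > 0" and "\<forall>i<d + length v + length w. shift (p + m) u i = shift p u i"
    using recurrent_return[OF \<open>recurrent u\<close>] by blast
  moreover define x y where "x = shift p u" and "y = shift (p + m) u"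
  ultimately have agree: "\<forall>i<d + length v + length w. x i = y i"
    by simp
  have shifted_by_d: "shift q u = shift d x" "shift (q + m) u = shift d y"
    using \<open>p \<le> q\<close> unfolding x_def y_def d_def shift_shift by (simp_all add: ac_simps)
  have "\<forall>i<length w. x i = y i"
    using agree by simp
  then have "starts_with (shift (p + m) u) w"
    using w_at_p unfolding x_def y_def by (rule starts_with_agree)
  then have not_above: "\<not> R x y"
    unfolding x_def y_def by (rule p_max)
  have "\<forall>i<length v. shift d x i = shift d y i"
    using agree unfolding shift_def by simp
  then have "starts_with (shift (q + m) u) v"
    using v_at_q unfolding shifted_by_d by (rule starts_with_agree)
  then have "\<not> R (shift d y) (shift d x)"
    unfolding shifted_by_d[symmetric] by (rule q_min)
  moreover have "\<forall>i<d. y i = x i"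
    using agree by simp
  ultimately have not_below: "\<not> R y x"
    using R_shift by blast
  from not_above not_below R_total have "y = x"
    by blast
  with aperiodic_shift_neq[OF \<open>aperiodic u\<close> \<open>m > 0\<close>] show False
    unfolding x_def y_def by blast
qed

theorem mainTheorem2:
  fixes u :: "nat \<Rightarrow> 'a::{finite,linorder}" and w v :: "'a list"
  assumes "recurrent u" and "aperiodic u"
    and "is_factor w u" and "is_factor v u"
  shows "\<not> ((\<exists>k. lex_max_in (shift k u) {x \<in> orbit_closure u. starts_with x w}) \<and>
             (\<exists>l. lex_min_in (shift l u) {x \<in> orbit_closure u. starts_with x v}))"
proof
  assume "(\<exists>k. lex_max_in (shift k u) {x \<in> orbit_closure u. starts_with x w}) \<and>
          (\<exists>l. lex_min_in (shift l u) {x \<in> orbit_closure u. starts_with x v})"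
  then obtain k l where
    k_max_in: "lex_max_in (shift k u) {x \<in> orbit_closure u. starts_with x w}" and
    l_min_in: "lex_min_in (shift l u) {x \<in> orbit_closure u. starts_with x v}"
    by blast
  have w_at_k: "starts_with (shift k u) w" and v_at_l: "starts_with (shift l u) v"
    using k_max_in l_min_in unfolding lex_max_in_def lex_min_in_def by auto
  have k_max: "\<And>j. starts_with (shift j u) w \<Longrightarrow> \<not> lex_less (shift k u) (shift j u)"
    using k_max_in shift_in_orbit_closure unfolding lex_max_in_def by blast
  have l_min: "\<And>j. starts_with (shift j u) v \<Longrightarrow> \<not> lex_less (shift j u) (shift l u)"
    using l_min_in shift_in_orbit_closure unfolding lex_min_in_def by blast
  show False
  proof (cases "k \<le> l")
    case True
    show False
      by (rule no_opposite_extremal_occurrences[where R = lex_less,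
            OF assms(1,2) lex_less_total lex_less_shift_iff True w_at_k v_at_l k_max l_min])
  next
    case False
    have "\<And>x y. x \<noteq> y \<Longrightarrow> lex_less y x \<or> lex_less x y"
      using lex_less_total by blast
    moreover have "\<And>x y d. \<forall>i<d. x i = y i \<Longrightarrow>
        lex_less (shift d y) (shift d x) \<longleftrightarrow> lex_less y x"
      by (simp add: lex_less_shift_iff)
    moreover have "l \<le> k"
      using False by simp
    ultimately show False
      using no_opposite_extremal_occurrences[where R = "\<lambda>x y. lex_less y x",
          OF assms(1,2) _ _ _ v_at_l w_at_k l_min k_max] by blast
  qed
qed

end
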